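(* Let $d\ge1$, $\eta>0$, and let $\mathcal{D}$ be the distribution on $\mathbb{R}^d\times\{-1,+1\}$ with $y$ uniform on $\{-1,+1\}$, $\bm{\mu}=(\eta,\dots,\eta)$, $\bm{x}\mid y=+1\sim\mathcal{N}(\bm{\mu},I)$ and $\bm{x}\mid y=-1\sim\mathcal{N}(-\bm{\mu},I)$. Let $0<\epsilon_{-1}<\epsilon_{+1}<\eta$ and $0<\epsilon<\eta$. Consider linear classifiers $f(\bm{x})=\operatorname{sign}(\bm{w}^\top\bm{x}+b)$ with $\|\bm{w}\|_2=1$, $b\in\mathbb{R}$. Let $f_{rob}$ minimize the class-dependent robust error $\Pr(\exists\bm{\delta},\|\bm{\delta}\|_\infty\le\epsilon_y: f(\bm{x}+\bm{\delta})\ne y)$, and let $f_{rob,\epsilon}$ minimize the robust error $\Pr(\exists\bm{\delta},\|\bm{\delta}\|_\infty\le\epsilon: f(\bm{x}+\bm{\delta})\ne y)$ with the same margin $\epsilon$ for both classes. For a classifier $f$ let $\mathcal{R}_{rob,\epsilon}(f\mid y)=\Pr(\exists\bm{\delta},\|\bm{\delta}\|_\infty\le\epsilon: f(\bm{x}+\bm{\delta})\ne y\mid y)$. Then $$\mathcal{R}_{rob,\epsilon}(f_{rob}\mid -1)-\mathcal{R}_{rob,\epsilon}(f_{rob,\epsilon}\mid -1)>\mathcal{R}_{rob,\epsilon}(f_{rob}\mid +1)-\mathcal{R}_{rob,\epsilon}(f_{rob,\epsilon}\mid +1).$$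
   Context: $I$ denotes the $d\times d$ identity matrix. *)

theory Defs
  imports "HOL-Probability.Probability"
begin

definition gauss_cond :: "real \<Rightarrow> real \<Rightarrow> (real ^ 'd::finite) measure" where
  "gauss_cond eta y = density lborel (\<lambda>x. \<Prod>i\<in>UNIV. normal_density (y * eta) 1 (x $ i))"

definition lin_clf :: "real ^ 'd::finite \<Rightarrow> real \<Rightarrow> real ^ 'd \<Rightarrow> real" where
  "lin_clf w b x = sgn (w \<bullet> x + b)"

definition rob_err_cond :: "real \<Rightarrow> real ^ 'd::finite \<Rightarrow> real \<Rightarrow> real \<Rightarrow> real \<Rightarrow> real" where
  "rob_err_cond eta w b e y =
     measure (gauss_cond eta y)
       {x. \<exists>\<delta>::real ^ 'd. (\<forall>i. \<bar>\<delta> $ i\<bar> \<le> e) \<and> lin_clf w b (x + \<delta>) \<noteq> y}"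

definition rob_err_cd :: "real \<Rightarrow> real \<Rightarrow> real \<Rightarrow> real ^ 'd::finite \<Rightarrow> real \<Rightarrow> real" where
  "rob_err_cd eta e_pos e_neg w b =
     (1/2) * rob_err_cond eta w b e_pos 1 + (1/2) * rob_err_cond eta w b e_neg (-1)"

definition is_rob_minimizer :: "real \<Rightarrow> real \<Rightarrow> real \<Rightarrow> real ^ 'd::finite \<Rightarrow> real \<Rightarrow> bool" where
  "is_rob_minimizer eta e_pos e_neg w b \<longleftrightarrow>
     norm w = 1 \<and>
     (\<forall>(w'::real ^ 'd) b'. norm w' = 1 \<longrightarrow> rob_err_cd eta e_pos e_neg w b \<le> rob_err_cd eta e_pos e_neg w' b')"

end

theory Submission
  imports Defs
begin

(* Given y, the projection w . x of a sample onto a unit vector w is N(y eta 1'w, 1), and the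
   worst l_inf perturbation of radius e moves it by e |w|_1 towards the decision boundary, so
   R_rob,e(f | y) = Phi(e |w|_1 - y b - eta 1'w).  Writing the class-dependent robust error as
   (Phi(-h - t) + Phi(-h + t)) / 2 with h = eta 1'w - (e_pos + e_neg)/2 |w|_1 and
   t = b - (e_pos - e_neg)/2 |w|_1, we have h <= (eta - (e_pos + e_neg)/2) sqrt d because
   1'w <= |w|_1 <= sqrt d, and Phi(-h - t) + Phi(-h + t) > 2 Phi(-h) for h > 0, t ~= 0 since the
   Gaussian density grows towards 0.  Hence every minimizer has 1'w = |w|_1 = sqrt d and
   b = (e_pos - e_neg)/2 sqrt d.  So f_rob has bias b > 0 and f_rob,eps has bias 0, and with
   c = (eps - eta) sqrt d the claim reads Phi(c + b) - Phi(c) > Phi(c - b) - Phi(c). *)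

section \<open>The standard normal distribution function\<close>

definition Phi :: "real \<Rightarrow> real" where
  "Phi = cdf std_normal_distribution"

lemma continuous_on_normal_density: "0 < \<sigma> \<Longrightarrow> continuous_on A (normal_density \<mu> \<sigma>)"
  unfolding normal_density_def by (intro continuous_intros) simp

lemma Phi_diff:
  assumes "a \<le> x"
  shows "Phi x - Phi a = integral {a..x} std_normal_density"
proof (cases "a = x")
  case False
  interpret N: real_distribution std_normal_distribution
    by (rule real_dist_normal_dist)
  have I: "(std_normal_density has_integral integral {a..x} std_normal_density) {a..x}"
    by (intro integrable_integral integrable_continuous_interval continuous_on_normal_density) simp
  from I have "(std_normal_density has_integral integral {a..x} std_normal_density) {a<..x}"
    by (rule has_integral_spike_set_eq[THEN iffD1, rotated 2])
       (auto intro: negligible_subset[of "{a}"])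
  then have "emeasure std_normal_distribution {a<..x} = integral {a..x} std_normal_density"
    by (simp add: emeasure_density nn_integral_has_integral_lebesgue')
  then show ?thesis
    using N.cdf_diff_eq[of a x] assms False has_integral_nonneg[OF I]
    by (simp add: Phi_def measure_def)
qed simp

lemma Phi_has_real_derivative: "(Phi has_real_derivative std_normal_density x) (at x)"
proof -
  have "((\<lambda>u. integral {x - 1..u} std_normal_density) has_real_derivative std_normal_density x)
      (at x within {x - 1..x + 1})"
    by (rule integral_has_real_derivative) (auto intro: continuous_on_normal_density)
  then have "((\<lambda>u. integral {x - 1..u} std_normal_density) has_real_derivative std_normal_density x)
      (at x)"
    by (subst (asm) at_within_interior) auto
  then have "((\<lambda>u. Phi (x - 1) + integral {x - 1..u} std_normal_density)
      has_real_derivative std_normal_density x) (at x)"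
    using DERIV_add[OF DERIV_const] by simp
  then show ?thesis
  proof (rule has_field_derivative_transform_within_open[where S = "{x - 1<..}"])
    show "Phi (x - 1) + integral {x - 1..u} std_normal_density = Phi u" if "u \<in> {x - 1<..}" for u
      using Phi_diff[of "x - 1" u] that by simp
  qed auto
qed

lemma strict_mono_Phi: "strict_mono Phi"
proof (rule strict_monoI)
  show "Phi x < Phi y" if "x < y" for x y
    using that by (rule DERIV_pos_imp_increasing)
      (auto intro!: exI Phi_has_real_derivative normal_density_pos)
qed

lemma Phi_minus_add: "Phi (- t) + Phi t = 2 * Phi 0"
proof -
  have "((\<lambda>t. Phi (- t) + Phi t) has_real_derivative
      std_normal_density (- x) * (- 1) + std_normal_density x) (at x)" for x
    by (intro DERIV_add DERIV_chain2[OF Phi_has_real_derivative] DERIV_minus DERIV_ident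
        Phi_has_real_derivative)
  then have "((\<lambda>t. Phi (- t) + Phi t) has_real_derivative 0) (at x)" for x
    by (simp add: normal_density_def)
  from DERIV_isconst_all[OF allI, OF this, of t 0] show ?thesis by simp
qed

lemma std_normal_density_less:
  assumes "\<bar>x\<bar> < \<bar>y\<bar>"
  shows "std_normal_density y < std_normal_density x"
proof -
  have "\<bar>x\<bar>\<^sup>2 < \<bar>y\<bar>\<^sup>2"
    using assms by (intro power_strict_mono) auto
  then have "x\<^sup>2 < y\<^sup>2"
    by simp
  then show ?thesis
    unfolding std_normal_density_def by (intro mult_strict_left_mono) auto
qed

lemma Phi_two_point_gt:
  assumes h: "0 < h" and t: "t \<noteq> 0"
  shows "2 * Phi (- h) < Phi (- h - t) + Phi (- h + t)"
proof -
  \<comment> \<open>k s - k 0 is the mass of [-h, -h + s] minus that of [-h - s, -h]; the first interval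
    is closer to 0, where the density is larger.\<close>
  define k where "k u = Phi (- h + u) + Phi (- h - u)" for u
  have "DERIV k u :> std_normal_density (- h + u) * 1 + std_normal_density (- h - u) * (- 1)" for u
    unfolding k_def
    by (intro DERIV_add DERIV_chain2[OF Phi_has_real_derivative] derivative_eq_intros) auto
  then have k_deriv: "DERIV k u :> std_normal_density (- h + u) - std_normal_density (- h - u)" for u
    by simp
  have "k 0 < k s" if s: "0 < s" for s
  proof -
    obtain z where z: "0 < z" "z < s"
      and "k s - k 0 = s * (std_normal_density (- h + z) - std_normal_density (- h - z))"
      using MVT2[OF s k_deriv] by (metis diff_zero)
    moreover have "std_normal_density (- h - z) < std_normal_density (- h + z)"
      using h z by (intro std_normal_density_less) simp
    ultimately have "0 < k s - k 0"
      using s by (simp add: zero_less_mult_iff)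
    then show ?thesis
      by simp
  qed
  then have "k 0 < k \<bar>t\<bar>"
    using t by simp
  moreover have "k (- t) = k t"
    by (simp add: k_def)
  ultimately have "k 0 < k t"
    by (simp add: abs_if split: if_splits)
  then show ?thesis
    unfolding k_def by (simp add: add.commute)
qed

lemma Phi_two_point_le_imp:
  assumes hs: "0 < hs" and h: "h \<le> hs"
    and le: "Phi (- h - t) + Phi (- h + t) \<le> 2 * Phi (- hs)"
  shows "t = 0 \<and> h = hs"
proof (cases "0 < h")
  case False
  have "2 * Phi (- hs) < 2 * Phi 0"
    using hs strict_mono_Phi by (simp add: strict_mono_less)
  also have "\<dots> = Phi (- t) + Phi t"
    by (rule Phi_minus_add[symmetric])
  also have "\<dots> \<le> Phi (- h - t) + Phi (- h + t)"
    using False strict_mono_Phi by (intro add_mono) (simp_all add: strict_mono_less_eq)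
  finally show ?thesis
    using le by simp
next
  case True
  have "Phi (- hs) \<le> Phi (- h)"
    using h strict_mono_Phi by (simp add: strict_mono_less_eq)
  then have "t = 0"
    using Phi_two_point_gt[OF True, of t] le by fastforce
  then show ?thesis
    using le h strict_mono_Phi by (auto simp: strict_mono_less_eq strict_mono_eq)
qed

section \<open>Linear functionals of Gaussian vectors\<close>

lemma indep_vars_PiM_coordinates:
  assumes "I \<noteq> {}" and M: "\<And>i. i \<in> I \<Longrightarrow> prob_space (M i)"
  shows "prob_space.indep_vars (PiM I M) M (\<lambda>i f. f i) I"
proof -
  interpret P: prob_space "PiM I M"
    using M by (rule prob_space_PiM)
  show ?thesis
  proof (subst P.indep_vars_iff_distr_eq_PiM')
    show "I \<noteq> {}" by fact
    show "(\<lambda>f. f i) \<in> measurable (PiM I M) (M i)" if "i \<in> I" for i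
      using that by (rule measurable_component_singleton)
    have "distr (PiM I M) (PiM I M) (\<lambda>f. \<lambda>i\<in>I. f i) = distr (PiM I M) (PiM I M) (\<lambda>f. f)"
      by (rule distr_cong) (auto simp: space_PiM)
    also have "\<dots> = PiM I (\<lambda>i. distr (PiM I M) (M i) (\<lambda>f. f i))"
      using M by (auto intro!: PiM_cong simp: distr_PiM_component)
    finally show "distr (PiM I M) (PiM I M) (\<lambda>f. \<lambda>i\<in>I. f i)
        = PiM I (\<lambda>i. distr (PiM I M) (M i) (\<lambda>f. f i))" .
  qed
qed

lemma distributed_PiM_normal_lincomb:
  fixes I :: "'i set" and c :: "'i \<Rightarrow> real"
  assumes I: "finite I" and c: "\<exists>i\<in>I. c i \<noteq> 0" and \<sigma>: "0 < \<sigma>"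
  shows "distributed (PiM I (\<lambda>_. density lborel (normal_density \<mu> \<sigma>))) lborel
      (\<lambda>f. \<Sum>i\<in>I. c i * f i) (normal_density (\<mu> * (\<Sum>i\<in>I. c i)) (\<sigma> * sqrt (\<Sum>i\<in>I. (c i)\<^sup>2)))"
proof -
  let ?N = "density lborel (normal_density \<mu> \<sigma>)"
  let ?P = "PiM I (\<lambda>_. ?N)"
  \<comment> \<open>The terms with c i = 0 are dropped, as sum_indep_normal needs positive deviations.\<close>
  define J where "J = {i \<in> I. c i \<noteq> 0}"
  have N: "prob_space ?N"
    using \<sigma> by (rule prob_space_normal_density)
  interpret P: prob_space ?P
    using N by (intro prob_space_PiM)
  have J: "finite J" "J \<noteq> {}" "J \<subseteq> I"
    using I c by (auto simp: J_def)
  have coord: "distributed ?P lborel (\<lambda>f. f i) (normal_density \<mu> \<sigma>)" if "i \<in> I" for i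
  proof -
    have "distr ?P lborel (\<lambda>f. f i) = distr ?P ?N (\<lambda>f. f i)"
      by (rule distr_cong) simp_all
    also have "\<dots> = ?N"
      using N that by (rule distr_PiM_component)
    finally show ?thesis
      using that by (auto simp: distributed_def)
  qed
  have "P.indep_vars (\<lambda>_. borel) (\<lambda>i f. c i * f i) J"
    using P.indep_vars_compose2[OF P.indep_vars_subset[OF indep_vars_PiM_coordinates J(3)],
        of "\<lambda>i z. c i * z" "\<lambda>_. borel"] I c N by (auto simp: J_def)
  then have "distributed ?P lborel (\<lambda>f. \<Sum>i\<in>J. c i * f i)
      (normal_density (\<Sum>i\<in>J. c i * \<mu>) (sqrt (\<Sum>i\<in>J. (\<bar>c i\<bar> * \<sigma>)\<^sup>2)))"
    using J \<sigma> P.normal_density_affine[OF coord, of _ "c _" 0]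
    by (intro P.sum_indep_normal) (auto simp: J_def)
  moreover have "(\<lambda>f. \<Sum>i\<in>J. c i * f i) = (\<lambda>f. \<Sum>i\<in>I. c i * f i)"
    by (auto intro!: sum.mono_neutral_left simp: I J_def)
  moreover have "(\<Sum>i\<in>J. c i * \<mu>) = \<mu> * (\<Sum>i\<in>I. c i)"
    by (auto intro!: sum.mono_neutral_left simp: I J_def sum_distrib_left mult.commute)
  moreover have "sqrt (\<Sum>i\<in>J. (\<bar>c i\<bar> * \<sigma>)\<^sup>2) = \<sigma> * sqrt (\<Sum>i\<in>I. (c i)\<^sup>2)"
  proof -
    have "(\<Sum>i\<in>J. (\<bar>c i\<bar> * \<sigma>)\<^sup>2) = (\<Sum>i\<in>I. \<sigma>\<^sup>2 * (c i)\<^sup>2)"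
      by (rule sum.mono_neutral_cong_left) (auto simp: I J_def power_mult_distrib)
    then have "(\<Sum>i\<in>J. (\<bar>c i\<bar> * \<sigma>)\<^sup>2) = \<sigma>\<^sup>2 * (\<Sum>i\<in>I. (c i)\<^sup>2)"
      by (simp add: sum_distrib_left)
    then show ?thesis
      using \<sigma> by (simp add: real_sqrt_mult)
  qed
  ultimately show ?thesis
    by simp
qed

lemma indicator_PiE_eq_prod:
  assumes "finite I" "x \<in> extensional I"
  shows "(indicator (PiE I A) x :: 'a::comm_semiring_1) = (\<Prod>i\<in>I. indicator (A i) (x i))"
proof (cases "x \<in> PiE I A")
  case False
  then obtain i where "i \<in> I" "x i \<notin> A i"
    using assms(2) by (auto simp: PiE_iff)
  with assms(1) have "(\<Prod>i\<in>I. indicator (A i) (x i) :: 'a) = 0"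
    by (intro prod_zero bexI[of _ i]) simp_all
  then show ?thesis
    using False by simp
qed (auto simp: PiE_iff intro!: prod.neutral[symmetric])

lemma PiM_density_lborel:
  fixes I :: "'i set" and g :: "real \<Rightarrow> real"
  assumes I: "finite I" and [measurable]: "g \<in> borel_measurable borel"
    and g: "prob_space (density lborel g)"
  shows "PiM I (\<lambda>_. density lborel g) = density (PiM I (\<lambda>_. lborel)) (\<lambda>f. \<Prod>i\<in>I. ennreal (g (f i)))"
proof -
  interpret P: product_prob_space "\<lambda>_::'i. density lborel g"
    using g by (rule product_prob_spaceI)
  interpret L: product_sigma_finite "\<lambda>_::'i. lborel :: real measure"
    by standard
  show ?thesis
  proof (rule P.PiM_eqI[symmetric, OF I])
    show "sets (density (PiM I (\<lambda>_. lborel)) (\<lambda>f. \<Prod>i\<in>I. ennreal (g (f i))))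
        = sets (PiM I (\<lambda>_. density lborel g))"
      by (simp only: sets_density) (rule sets_PiM_cong; simp)
  next
    fix A assume "\<And>i. i \<in> I \<Longrightarrow> A i \<in> sets (density lborel g)"
    then have A[measurable]: "\<And>i. i \<in> I \<Longrightarrow> A i \<in> sets borel"
      by simp
    have "emeasure (density (PiM I (\<lambda>_. lborel)) (\<lambda>f. \<Prod>i\<in>I. ennreal (g (f i)))) (PiE I A)
        = (\<integral>\<^sup>+f. (\<Prod>i\<in>I. ennreal (g (f i)) * indicator (A i) (f i)) \<partial>PiM I (\<lambda>_. lborel))"
      using I A
      by (subst emeasure_density)
         (auto intro!: sets_PiM_I_finite nn_integral_cong
           simp: indicator_PiE_eq_prod space_PiM PiE_iff prod.distrib)
    also have "\<dots> = (\<Prod>i\<in>I. \<integral>\<^sup>+x. ennreal (g x) * indicator (A i) x \<partial>lborel)"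
      using I by (intro L.product_nn_integral_prod) auto
    also have "\<dots> = (\<Prod>i\<in>I. emeasure (density lborel g) (A i))"
      by (intro prod.cong refl) (simp add: emeasure_density)
    finally show "emeasure (density (PiM I (\<lambda>_. lborel)) (\<lambda>f. \<Prod>i\<in>I. ennreal (g (f i)))) (PiE I A)
        = (\<Prod>i\<in>I. emeasure (density lborel g) (A i))" .
  qed
qed

lemma density_lborel_prod_Basis:
  fixes g :: "real \<Rightarrow> real"
  assumes [measurable]: "g \<in> borel_measurable borel" and g: "prob_space (density lborel g)"
  shows "density lborel (\<lambda>x::'a::euclidean_space. \<Prod>b\<in>Basis. ennreal (g (x \<bullet> b)))
    = distr (PiM Basis (\<lambda>_. density lborel g)) borel (\<lambda>f. \<Sum>b\<in>Basis. f b *\<^sub>R b)"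
proof -
  let ?T = "\<lambda>f. \<Sum>b\<in>Basis. f b *\<^sub>R (b :: 'a)"
  have T_inner: "?T f \<bullet> b = f b" if "b \<in> Basis" for f b
    using that by (simp add: inner_sum_left inner_Basis if_distrib cong: if_cong)
  have "density lborel (\<lambda>x::'a. \<Prod>b\<in>Basis. ennreal (g (x \<bullet> b)))
      = density (distr (PiM Basis (\<lambda>_. lborel)) borel ?T) (\<lambda>x. \<Prod>b\<in>Basis. ennreal (g (x \<bullet> b)))"
    by (subst lborel_eq) rule
  also have "\<dots> = distr (density (PiM Basis (\<lambda>_. lborel)) (\<lambda>f. \<Prod>b\<in>Basis. ennreal (g (f b)))) borel ?T"
    by (subst density_distr) (auto simp: T_inner cong: prod.cong)
  also have "\<dots> = distr (PiM Basis (\<lambda>_. density lborel g)) borel ?T"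
    using g by (subst PiM_density_lborel) simp_all
  finally show ?thesis .
qed

lemma prod_Basis_vec: "(\<Prod>b\<in>(Basis :: (real^'n) set). f b) = (\<Prod>i\<in>UNIV. f (axis i 1))"
proof -
  have inj: "inj (\<lambda>i::'n. axis i (1::real))"
    by (auto simp: inj_def axis_eq_axis)
  have "(Basis :: (real^'n) set) = range (\<lambda>i. axis i 1)"
    by (auto simp: Basis_vec_def Basis_real_def)
  then show ?thesis
    using prod.reindex[OF inj, of f] by (simp add: comp_def)
qed

lemma gauss_cond_eq_distr_PiM:
  "gauss_cond eta y = distr (PiM (Basis :: (real^'n) set) (\<lambda>_. density lborel (normal_density (y * eta) 1)))
     borel (\<lambda>f. \<Sum>b\<in>Basis. f b *\<^sub>R b)"
proof -
  have "(\<lambda>x::real^'n. ennreal (\<Prod>i\<in>UNIV. normal_density (y * eta) 1 (x $ i)))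
      = (\<lambda>x. \<Prod>b\<in>Basis. ennreal (normal_density (y * eta) 1 (x \<bullet> b)))"
    by (simp add: prod_Basis_vec cart_eq_inner_axis prod_ennreal)
  then show ?thesis
    unfolding gauss_cond_def
    by (simp add: density_lborel_prod_Basis prob_space_normal_density)
qed

lemma prob_space_gauss_cond: "prob_space (gauss_cond eta y)"
  unfolding gauss_cond_eq_distr_PiM
  by (intro prob_space.prob_space_distr prob_space_PiM prob_space_normal_density) simp_all

definition coord_sum :: "real^'n \<Rightarrow> real" where
  "coord_sum w = (\<Sum>i\<in>UNIV. w $ i)"

definition l1_norm :: "real^'n \<Rightarrow> real" where
  "l1_norm w = (\<Sum>i\<in>UNIV. \<bar>w $ i\<bar>)"

lemma sum_Basis_inner_vec: "(\<Sum>b\<in>Basis. w \<bullet> b) = coord_sum (w :: real^'n)"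
proof -
  have "(\<Sum>b\<in>Basis. w \<bullet> b) = w \<bullet> (\<chi> i. 1)"
    by (simp add: inner_sum_right const_vector_cart[of 1])
  then show ?thesis
    by (simp add: coord_sum_def inner_vec_def)
qed

lemma distributed_inner_gauss_cond:
  fixes w :: "real^'n"
  assumes "w \<noteq> 0"
  shows "distributed (gauss_cond eta y) lborel (\<lambda>x. w \<bullet> x) (normal_density (y * eta * coord_sum w) (norm w))"
proof -
  let ?P = "PiM (Basis :: (real^'n) set) (\<lambda>_. density lborel (normal_density (y * eta) 1))"
  let ?T = "\<lambda>f. \<Sum>b\<in>Basis. f b *\<^sub>R (b :: real^'n)"
  have "\<exists>b\<in>Basis. w \<bullet> b \<noteq> 0"
    using assms by (metis euclidean_all_zero_iff)
  then have "distributed ?P lborel (\<lambda>f. \<Sum>b\<in>Basis. (w \<bullet> b) * f b)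
      (normal_density (y * eta * (\<Sum>b\<in>Basis. w \<bullet> b)) (1 * sqrt (\<Sum>b\<in>Basis. (w \<bullet> b)\<^sup>2)))"
    by (intro distributed_PiM_normal_lincomb) auto
  moreover have "(\<lambda>f. \<Sum>b\<in>Basis. (w \<bullet> b) * f b) = (\<lambda>f. w \<bullet> ?T f)"
    by (simp add: inner_sum_right mult.commute)
  moreover have "sqrt (\<Sum>b\<in>Basis. (w \<bullet> b)\<^sup>2) = norm w"
    by (simp add: norm_eq_sqrt_inner euclidean_inner[of w w] power2_eq_square)
  ultimately have D: "distributed ?P lborel (\<lambda>f. w \<bullet> ?T f) (normal_density (y * eta * coord_sum w) (norm w))"
    by (simp add: sum_Basis_inner_vec)
  have "measurable ?P (borel :: (real^'n) measure) = measurable (PiM Basis (\<lambda>_. borel)) borel"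
    by (rule measurable_cong_sets[OF sets_PiM_cong refl]) simp_all
  moreover have "?T \<in> measurable (PiM Basis (\<lambda>_. borel)) borel"
    by measurable
  ultimately have [measurable]: "?T \<in> measurable ?P borel"
    by simp
  have [measurable]: "(\<lambda>x. w \<bullet> x) \<in> measurable borel lborel"
    unfolding measurable_lborel1 by measurable
  have "distr (gauss_cond eta y) lborel (\<lambda>x. w \<bullet> x) = distr ?P lborel (\<lambda>f. w \<bullet> ?T f)"
    unfolding gauss_cond_eq_distr_PiM by (subst distr_distr) (simp_all add: comp_def)
  with D show ?thesis
    by (simp add: distributed_def gauss_cond_eq_distr_PiM)
qed

section \<open>Robust error of a linear classifier\<close>

lemma abs_inner_le_l1_norm:
  assumes "\<And>i. \<bar>\<delta> $ i\<bar> \<le> e"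
  shows "\<bar>w \<bullet> \<delta>\<bar> \<le> e * l1_norm w"
proof -
  have "\<bar>w \<bullet> \<delta>\<bar> \<le> (\<Sum>i\<in>UNIV. \<bar>w $ i * \<delta> $ i\<bar>)"
    unfolding inner_vec_def inner_real_def by (rule sum_abs)
  also have "\<dots> \<le> (\<Sum>i\<in>UNIV. \<bar>w $ i\<bar> * e)"
    using assms by (intro sum_mono) (simp add: abs_mult mult_left_mono)
  finally show ?thesis
    by (simp add: l1_norm_def sum_distrib_left mult.commute)
qed

lemma inner_sgn_vec: "w \<bullet> (\<chi> i. sgn (w $ i)) = l1_norm w"
  unfolding inner_vec_def l1_norm_def by (simp add: abs_sgn)

lemma robust_error_set_eq:
  fixes w :: "real^'n"
  assumes y: "y = 1 \<or> y = -1" and e: "0 \<le> e"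
  shows "{x. \<exists>\<delta>::real^'n. (\<forall>i. \<bar>\<delta> $ i\<bar> \<le> e) \<and> lin_clf w b (x + \<delta>) \<noteq> y}
       = {x. y * (w \<bullet> x) \<le> e * l1_norm w - y * b}"
proof -
  have misclassified: "lin_clf w b z \<noteq> y \<longleftrightarrow> y * (w \<bullet> x) + y * (w \<bullet> \<delta>) + y * b \<le> 0"
    if "z = x + \<delta>" for x z \<delta> :: "real^'n"
    using y by (auto simp: that lin_clf_def sgn_if inner_add_right distrib_left)
  have "y * (w \<bullet> x) \<le> e * l1_norm w - y * b"
    if "\<forall>i. \<bar>\<delta> $ i\<bar> \<le> e" "y * (w \<bullet> x) + y * (w \<bullet> \<delta>) + y * b \<le> 0" for x \<delta> :: "real^'n"
  proof -
    have "- (y * (w \<bullet> \<delta>)) \<le> e * l1_norm w"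
      using abs_inner_le_l1_norm[of \<delta> e w] that(1) y by auto
    then show ?thesis
      using that(2) by linarith
  qed
  moreover have "\<exists>\<delta>::real^'n. (\<forall>i. \<bar>\<delta> $ i\<bar> \<le> e) \<and> y * (w \<bullet> x) + y * (w \<bullet> \<delta>) + y * b \<le> 0"
    if "y * (w \<bullet> x) \<le> e * l1_norm w - y * b" for x :: "real^'n"
  proof (intro exI conjI allI)
    let ?\<delta> = "(- (y * e)) *\<^sub>R (\<chi> i. sgn (w $ i))"
    show "\<bar>?\<delta> $ i\<bar> \<le> e" for i
      using y e by (auto simp: abs_mult abs_sgn_eq)
    have "y * (w \<bullet> ?\<delta>) = - (y * y) * e * l1_norm w"
      by (simp add: inner_sgn_vec)
    also have "\<dots> = - e * l1_norm w"
      using y by auto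
    finally show "y * (w \<bullet> x) + y * (w \<bullet> ?\<delta>) + y * b \<le> 0"
      using that by linarith
  qed
  ultimately show ?thesis
    by (auto simp: misclassified)
qed

lemma rob_err_cond_eq_Phi:
  fixes w :: "real^'n"
  assumes w: "norm w = 1" and y: "y = 1 \<or> y = -1" and e: "0 \<le> e"
  shows "rob_err_cond eta w b e y = Phi (e * l1_norm w - y * b - eta * coord_sum w)"
proof -
  let ?G = "gauss_cond eta y :: (real^'n) measure"
  let ?Z = "\<lambda>x. - (eta * coord_sum w) + y * (w \<bullet> x)"
  interpret G: prob_space ?G
    by (rule prob_space_gauss_cond)
  have Z_affine: "distributed ?G lborel ?Z
      (normal_density (- (eta * coord_sum w) + y * (y * eta * coord_sum w)) (\<bar>y\<bar> * norm w))"
    using w y by (intro G.normal_density_affine distributed_inner_gauss_cond) auto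
  have "- (eta * coord_sum w) + y * (y * eta * coord_sum w) = 0" "\<bar>y\<bar> * norm w = 1"
    using w y by auto
  with Z_affine have Z: "distributed ?G lborel ?Z std_normal_density"
    by (simp only:)
  have "rob_err_cond eta w b e y = measure ?G (?Z -` {..e * l1_norm w - y * b - eta * coord_sum w} \<inter> space ?G)"
    unfolding rob_err_cond_def robust_error_set_eq[OF y e]
    by (rule arg_cong[where f = "measure ?G"]) (auto simp: gauss_cond_def)
  also have "\<dots> = measure (distr ?G lborel ?Z) {..e * l1_norm w - y * b - eta * coord_sum w}"
    using Z by (intro measure_distr[symmetric]) (auto simp: distributed_def)
  also have "\<dots> = Phi (e * l1_norm w - y * b - eta * coord_sum w)"
    using Z by (simp add: distributed_def Phi_def cdf_def)
  finally show ?thesis .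
qed

section \<open>Minimizers of the class-dependent robust error\<close>

lemma coord_sum_le_l1_norm: "coord_sum w \<le> l1_norm w"
  unfolding coord_sum_def l1_norm_def by (intro sum_mono) simp

lemma l1_norm_le_sqrt_card: "l1_norm (w :: real^'n) \<le> sqrt CARD('n) * norm w"
proof -
  have "l1_norm w = (\<chi> i. \<bar>w $ i\<bar>) \<bullet> (\<chi> i. 1)"
    by (simp add: l1_norm_def inner_vec_def)
  also have "\<dots> \<le> norm (\<chi> i. \<bar>w $ i\<bar>) * norm ((\<chi> i. 1) :: real^'n)"
    by (rule norm_cauchy_schwarz)
  also have "\<dots> = norm w * sqrt CARD('n)"
    by (simp add: norm_vec_def L2_set_def)
  finally show ?thesis
    by (simp add: mult.commute)
qed

definition diag_unit :: "real^'n" where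
  "diag_unit = (\<chi> i. 1 / sqrt CARD('n))"

lemma norm_diag_unit: "norm (diag_unit :: real^'n) = 1"
  by (simp add: diag_unit_def norm_vec_def L2_set_def power_divide)

lemma coord_sum_diag_unit: "coord_sum (diag_unit :: real^'n) = sqrt CARD('n)"
  by (simp add: diag_unit_def coord_sum_def real_div_sqrt)

lemma l1_norm_diag_unit: "l1_norm (diag_unit :: real^'n) = sqrt CARD('n)"
  by (simp add: diag_unit_def l1_norm_def real_div_sqrt)

lemma rob_err_cd_eq_Phi:
  assumes "norm w = 1" "0 \<le> e_pos" "0 \<le> e_neg"
  shows "rob_err_cd eta e_pos e_neg w b =
    (Phi (e_pos * l1_norm w - b - eta * coord_sum w) + Phi (e_neg * l1_norm w + b - eta * coord_sum w)) / 2"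
  using assms by (simp add: rob_err_cd_def rob_err_cond_eq_Phi)

lemma is_rob_minimizerD:
  fixes w :: "real^'n"
  assumes eps: "0 \<le> e_pos" "0 \<le> e_neg" "e_pos < eta" "e_neg < eta"
    and min: "is_rob_minimizer eta e_pos e_neg w b"
  shows "coord_sum w = sqrt CARD('n)" "l1_norm w = sqrt CARD('n)"
    and "b = (e_pos - e_neg) / 2 * sqrt CARD('n)"
proof -
  let ?r = "sqrt CARD('n)"
  define e where "e = (e_pos + e_neg) / 2"
  define d where "d = (e_pos - e_neg) / 2"
  define h where "h = eta * coord_sum w - e * l1_norm w"
  define t where "t = b - d * l1_norm w"
  define h\<^sub>0 where "h\<^sub>0 = (eta - e) * ?r"
  have w: "norm w = 1"
    using min by (simp add: is_rob_minimizer_def)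
  have e: "0 \<le> e" "e < eta"
    using eps by (auto simp: e_def)
  have "h \<le> (eta - e) * l1_norm w"
    using coord_sum_le_l1_norm[of w] e by (simp add: h_def algebra_simps mult_left_mono)
  also have "\<dots> \<le> h\<^sub>0"
    using l1_norm_le_sqrt_card[of w] w e by (simp add: h\<^sub>0_def)
  finally have h: "h \<le> h\<^sub>0" .
  have "rob_err_cd eta e_pos e_neg w b \<le> rob_err_cd eta e_pos e_neg (diag_unit :: real^'n) (d * ?r)"
    using min norm_diag_unit unfolding is_rob_minimizer_def by blast
  also have "rob_err_cd eta e_pos e_neg (diag_unit :: real^'n) (d * ?r) = Phi (- h\<^sub>0)"
  proof -
    have "e_pos * ?r - d * ?r - eta * ?r = - h\<^sub>0" "e_neg * ?r + d * ?r - eta * ?r = - h\<^sub>0"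
      by (simp_all add: h\<^sub>0_def e_def d_def field_simps)
    then show ?thesis
      using eps by (simp add: rob_err_cd_eq_Phi norm_diag_unit coord_sum_diag_unit l1_norm_diag_unit)
  qed
  also have "rob_err_cd eta e_pos e_neg w b = (Phi (- h - t) + Phi (- h + t)) / 2"
  proof -
    have "e_pos * l1_norm w - b - eta * coord_sum w = - h - t"
      "e_neg * l1_norm w + b - eta * coord_sum w = - h + t"
      by (simp_all add: h_def t_def e_def d_def field_simps)
    then show ?thesis
      using w eps by (simp add: rob_err_cd_eq_Phi)
  qed
  finally have "Phi (- h - t) + Phi (- h + t) \<le> 2 * Phi (- h\<^sub>0)"
    by simp
  moreover have "0 < h\<^sub>0"
    using e by (simp add: h\<^sub>0_def)
  ultimately have "t = 0" "h = h\<^sub>0"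
    using Phi_two_point_le_imp h by blast+
  then have "eta * (l1_norm w - coord_sum w) + (eta - e) * (?r - l1_norm w) = 0"
    by (simp add: h_def h\<^sub>0_def algebra_simps)
  moreover have "0 \<le> eta * (l1_norm w - coord_sum w)" "0 \<le> (eta - e) * (?r - l1_norm w)"
    using coord_sum_le_l1_norm[of w] l1_norm_le_sqrt_card[of w] w e by simp_all
  ultimately have "eta * (l1_norm w - coord_sum w) = 0" "(eta - e) * (?r - l1_norm w) = 0"
    by linarith+
  then show "coord_sum w = ?r" "l1_norm w = ?r"
    using e by auto
  then show "b = (e_pos - e_neg) / 2 * ?r"
    using \<open>t = 0\<close> by (simp add: t_def d_def)
qed

theorem corollary2:
  fixes eta eps eps_pos eps_neg :: real
    and w w' :: "real ^ 'd::finite"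
    and b b' :: real
  assumes "eta > 0"
    and "0 < eps_neg" and "eps_neg < eps_pos" and "eps_pos < eta"
    and "0 < eps" and "eps < eta"
    and "is_rob_minimizer eta eps_pos eps_neg w b"
    and "is_rob_minimizer eta eps eps w' b'"
  shows "rob_err_cond eta w b eps (-1) - rob_err_cond eta w' b' eps (-1)
         > rob_err_cond eta w b eps 1 - rob_err_cond eta w' b' eps 1"
proof -
  let ?r = "sqrt CARD('d)"
  have err: "rob_err_cond eta v c eps y = Phi ((eps - eta) * ?r - y * c)"
    if "is_rob_minimizer eta e_pos e_neg v c" "0 \<le> e_neg" "e_neg \<le> e_pos" "e_pos < eta"
      and "y = 1 \<or> y = -1" for v :: "real^'d" and c e_pos e_neg y
    using that assms is_rob_minimizerD[OF _ _ _ _ that(1)]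
    by (simp add: rob_err_cond_eq_Phi is_rob_minimizer_def algebra_simps)
  have "b = (eps_pos - eps_neg) / 2 * ?r" "b' = 0"
    using assms is_rob_minimizerD(3)[OF _ _ _ _ assms(7)] is_rob_minimizerD(3)[OF _ _ _ _ assms(8)]
    by simp_all
  moreover have "0 < (eps_pos - eps_neg) / 2 * ?r"
    using assms by simp
  ultimately have "Phi ((eps - eta) * ?r - b) < Phi ((eps - eta) * ?r + b)" "b' = 0"
    using strict_mono_Phi by (simp_all add: strict_mono_less)
  then show ?thesis
    using assms by (simp add: err)
qed

end
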